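(* Let $\|\cdot\|$ be a norm on $\mathbb{R}^d$ and $\Phi$ a mirror map whose Bregman divergence satisfies $\frac{m}{2}\|x-y\|^2\le D_\Phi(x,y)\le\frac{M}{2}\|x-y\|^2$ for all $x,y$, with $0<m\le M$; let $\kappa=M/m$. Consider Primal Online Balanced Descent with parameter $\beta>0$, norm $\|\cdot\|$ and mirror map $\Phi$, at round $t$, producing $x_t$ from $x_{t-1}$ and convex cost function $f_t$ with minimizer $v_t$. Let $x_t^*$ be a point with $H_t^*=f_t(x_t^* )<H_t=f_t(x_t)$, and suppose $f_t(x)\ge\alpha\|x-v_t\|$ for all $x$, where $\alpha>0$. Then $$\|x_t-x_t^*\|-\|x_t^*-x_{t-1}\|\le-\gamma\|x_t-x_{t-1}\|,\qquad\text{where }\gamma=\frac{1}{\sqrt{\kappa}}\sqrt{1+\left(\tfrac{2}{\alpha\beta}\right)^2}-\tfrac{2}{\alpha\beta}.$$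
   Context: $D_\Phi(x,y)=\Phi(x)-\Phi(y)-\nabla\Phi(y)^T(x-y)$; $\Pi^\Phi_K(x)=\arg\min_{y\in K}D_\Phi(y,x)$. Primal Online Balanced Descent with parameter $\beta>0$: given $x_{t-1}$ and $f_t$, let $v_t=\arg\min_x f_t(x)$; if $\|x_{t-1}-v_t\|<\beta f_t(v_t)$ set $x_t=v_t$; otherwise, with $K^l_t=\{x:f_t(x)\le l\}$ and $x(l)=\Pi^\Phi_{K^l_t}(x_{t-1})$, increase $l$ until $\|x(l)-x_{t-1}\|=\beta l$ and set $x_t=x(l)$. *)

theory Defs
  imports "HOL-Analysis.Analysis"
begin

definition is_norm :: "(real^'d \<Rightarrow> real) \<Rightarrow> bool" where
  "is_norm N \<longleftrightarrow>
     (\<forall>x. N x = 0 \<longleftrightarrow> x = 0) \<and>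
     (\<forall>c x. N (c *\<^sub>R x) = \<bar>c\<bar> * N x) \<and>
     (\<forall>x y. N (x + y) \<le> N x + N y)"

definition bregman :: "(real^'d \<Rightarrow> real) \<Rightarrow> (real^'d \<Rightarrow> real^'d) \<Rightarrow> real^'d \<Rightarrow> real^'d \<Rightarrow> real" where
  "bregman Phi gPhi x y = Phi x - Phi y - gPhi y \<bullet> (x - y)"

definition is_bregman_proj ::
  "(real^'d \<Rightarrow> real) \<Rightarrow> (real^'d \<Rightarrow> real^'d) \<Rightarrow> (real^'d) set \<Rightarrow> real^'d \<Rightarrow> real^'d \<Rightarrow> bool" where
  "is_bregman_proj Phi gPhi K x p \<longleftrightarrow>
     p \<in> K \<and> (\<forall>y\<in>K. bregman Phi gPhi p x \<le> bregman Phi gPhi y x)"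

definition pobd_step ::
  "(real^'d \<Rightarrow> real) \<Rightarrow> (real^'d \<Rightarrow> real) \<Rightarrow> (real^'d \<Rightarrow> real^'d) \<Rightarrow> real
   \<Rightarrow> (real^'d \<Rightarrow> real) \<Rightarrow> real^'d \<Rightarrow> real^'d \<Rightarrow> real^'d \<Rightarrow> bool" where
  "pobd_step N Phi gPhi \<beta> f v xprev xt \<longleftrightarrow>
     (N (xprev - v) < \<beta> * f v \<and> xt = v) \<or>
     (\<not> N (xprev - v) < \<beta> * f v \<and>
      (\<exists>l. is_bregman_proj Phi gPhi {x. f x \<le> l} xprev xt \<and> N (xt - xprev) = \<beta> * l))"

end

theory Submission
  imports Defs
begin

(* The Bregman projection x_t of x_{t-1} onto the convex sublevel set {f <= l} satisfies the
   generalised Pythagorean inequality D(x*, x_{t-1}) >= D(x*, x_t) + D(x_t, x_{t-1}) for x* in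
   that set; with the quadratic bounds on D this gives
   M |x* - x_{t-1}|^2 >= m (|x_t - x*|^2 + |x_t - x_{t-1}|^2).
   The growth condition confines the sublevel set to a ball of radius l/alpha around v, so
   |x_t - x*| <= 2l/alpha = (2/(alpha beta)) |x_t - x_{t-1}| by the balance condition.
   Since a -> a - r sqrt(a^2 + b^2) is nondecreasing for r <= 1, the worst case is
   |x_t - x*| = (2/(alpha beta)) |x_t - x_{t-1}|, which yields gamma. *)

lemma is_norm_scaleR: "is_norm N \<Longrightarrow> N (c *\<^sub>R x) = \<bar>c\<bar> * N x"
  unfolding is_norm_def by blast

lemma is_norm_triangle: "is_norm N \<Longrightarrow> N (x + y) \<le> N x + N y"
  unfolding is_norm_def by blast

lemma is_norm_minus_commute: "is_norm N \<Longrightarrow> N (x - y) = N (y - x)"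
  using is_norm_scaleR[of N "-1" "x - y"] by simp

lemma is_norm_nonneg: "is_norm N \<Longrightarrow> 0 \<le> N x"
  using is_norm_triangle[of N x "- x"] is_norm_minus_commute[of N 0 x] is_norm_scaleR[of N 0 x]
  by simp

lemma bregman_three_point:
  "bregman Phi gPhi y x = bregman Phi gPhi y p + bregman Phi gPhi p x + (gPhi p - gPhi x) \<bullet> (y - p)"
  unfolding bregman_def by (simp add: algebra_simps inner_diff_left inner_diff_right)

lemma convex_sublevel_set:
  assumes f: "convex_on UNIV f"
  shows "convex {x. f x \<le> l}"
  unfolding convex_alt
proof (intro ballI allI impI)
  fix x y and u :: real
  assume "x \<in> {x. f x \<le> l}" "y \<in> {x. f x \<le> l}" and u: "0 \<le> u \<and> u \<le> 1"
  then have "f ((1 - u) *\<^sub>R x + u *\<^sub>R y) \<le> (1 - u) * f x + u * f y"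
    using convex_onD[OF f] by simp
  also have "\<dots> \<le> (1 - u) * l + u * l"
    using u \<open>x \<in> _\<close> \<open>y \<in> _\<close> by (intro add_mono mult_left_mono) auto
  finally show "(1 - u) *\<^sub>R x + u *\<^sub>R y \<in> {x. f x \<le> l}" by (simp add: algebra_simps)
qed

text \<open>The upper quadratic bound on D(\<cdot>, p) makes the second-order term negligible along the
  segment from p towards y, so the first-order term must be nonnegative.\<close>
lemma bregman_proj_variational_ineq:
  assumes norm: "is_norm N" and "convex K"
    and proj: "is_bregman_proj Phi gPhi K x p"
    and upper: "\<forall>z. bregman Phi gPhi z p \<le> C * (N (z - p))\<^sup>2" and C: "0 < C"
    and y: "y \<in> K"
  shows "0 \<le> (gPhi p - gPhi x) \<bullet> (y - p)"
proof (rule ccontr)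
  let ?D = "bregman Phi gPhi"
  define g where "g = (gPhi p - gPhi x) \<bullet> (y - p)"
  define n where "n = N (y - p)"
  assume "\<not> 0 \<le> (gPhi p - gPhi x) \<bullet> (y - p)"
  then have g: "g < 0" unfolding g_def by simp
  have n: "0 \<le> n" unfolding n_def using is_norm_nonneg[OF norm] .
  define s where "s = min 1 (- g / (C * (n\<^sup>2 + 1)))"
  have Cn: "0 < C * (n\<^sup>2 + 1)" using C by (intro mult_pos_pos) (simp_all add: add_nonneg_pos)
  have s: "0 < s" "s \<le> 1" using g Cn unfolding s_def by (auto simp: divide_neg_pos)
  have "s \<le> - g / (C * (n\<^sup>2 + 1))" unfolding s_def by (rule min.cobounded2)
  then have s_small: "s * (C * (n\<^sup>2 + 1)) \<le> - g" using pos_le_divide_eq[OF Cn] by blast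
  define z where "z = p + s *\<^sub>R (y - p)"
  have pK: "p \<in> K" using proj unfolding is_bregman_proj_def by blast
  have "z = (1 - s) *\<^sub>R p + s *\<^sub>R y" unfolding z_def by (simp add: algebra_simps)
  then have "z \<in> K" using \<open>convex K\<close> pK y s by (simp add: convexD)
  then have opt: "?D p x \<le> ?D z x" using proj unfolding is_bregman_proj_def by blast
  have three: "?D z x = ?D z p + ?D p x + s * g"
    using bregman_three_point[of Phi gPhi z x p] unfolding g_def z_def by (simp add: inner_scaleR_right)
  have "N (z - p) = s * n"
    using is_norm_scaleR[OF norm, of s "y - p"] s unfolding z_def n_def by simp
  then have "?D z p \<le> C * (s * n)\<^sup>2" using upper[rule_format, of z] by simp
  then have "0 \<le> C * (s * n)\<^sup>2 + s * g" using opt three by linarith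
  then have "0 \<le> s * (C * s * n\<^sup>2 + g)" by (simp add: algebra_simps power2_eq_square)
  then have "0 \<le> C * s * n\<^sup>2 + g" using s by (simp add: zero_le_mult_iff)
  moreover have "C * s * n\<^sup>2 < s * (C * (n\<^sup>2 + 1))"
    using mult_pos_pos[OF C s(1)] by (simp add: algebra_simps)
  ultimately show False using s_small by linarith
qed

lemma bregman_proj_pythagoras:
  assumes "is_norm N" and "convex K" and "is_bregman_proj Phi gPhi K x p"
    and "\<forall>z. bregman Phi gPhi z p \<le> C * (N (z - p))\<^sup>2" and "0 < C" and "y \<in> K"
  shows "bregman Phi gPhi y p + bregman Phi gPhi p x \<le> bregman Phi gPhi y x"
  using bregman_three_point[of Phi gPhi y x p] bregman_proj_variational_ineq[OF assms] by simp

lemma sublevel_set_dist_le: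
  assumes norm: "is_norm N" and growth: "\<forall>x. \<alpha> * N (x - v) \<le> f x" and "0 < \<alpha>"
    and x: "f x \<le> l" and y: "f y \<le> l"
  shows "N (x - y) \<le> 2 * l / \<alpha>"
proof -
  have "N (x - y) \<le> N (x - v) + N (y - v)"
    using is_norm_triangle[OF norm, of "x - v" "v - y"] is_norm_minus_commute[OF norm, of v y]
    by simp
  also have "\<alpha> * \<dots> \<le> 2 * l"
    using growth[rule_format, of x] growth[rule_format, of y] x y
    unfolding distrib_left by linarith
  finally show ?thesis using \<open>0 < \<alpha>\<close> by (simp add: pos_le_divide_eq mult.commute)
qed

lemma sqrt_sum_squares_le_add_diff:
  fixes a a' b :: real
  assumes "a \<le> a'"
  shows "sqrt (a'\<^sup>2 + b\<^sup>2) \<le> sqrt (a\<^sup>2 + b\<^sup>2) + (a' - a)"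
  using real_sqrt_sum_squares_triangle_ineq[of a "a' - a" b 0] assms by simp

lemma diff_le_of_sqrt_sum_squares_le:
  fixes a b c k r :: real
  assumes "0 \<le> b" and "0 < r" and "r \<le> 1" and ak: "a \<le> k * b"
    and c: "r * sqrt (a\<^sup>2 + b\<^sup>2) \<le> c"
  shows "a - c \<le> - (r * sqrt (1 + k\<^sup>2) - k) * b"
proof -
  have "(k * b)\<^sup>2 + b\<^sup>2 = b\<^sup>2 * (1 + k\<^sup>2)" by (simp add: algebra_simps power_mult_distrib)
  then have "sqrt (1 + k\<^sup>2) * b = sqrt ((k * b)\<^sup>2 + b\<^sup>2)"
    using \<open>0 \<le> b\<close> by (simp add: real_sqrt_mult)
  also have "\<dots> \<le> sqrt (a\<^sup>2 + b\<^sup>2) + (k * b - a)"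
    using sqrt_sum_squares_le_add_diff[OF ak] .
  finally have "r * (sqrt (1 + k\<^sup>2) * b) \<le> r * sqrt (a\<^sup>2 + b\<^sup>2) + r * (k * b - a)"
    using \<open>0 < r\<close> by (simp add: mult_left_mono flip: distrib_left)
  moreover have "r * (k * b - a) \<le> k * b - a"
    using \<open>0 < r\<close> \<open>r \<le> 1\<close> ak by (intro mult_left_le_one_le) simp_all
  ultimately show ?thesis using c by (simp add: algebra_simps)
qed

theorem lemma14:
  fixes N Phi f :: "real^'d \<Rightarrow> real"
    and gPhi :: "real^'d \<Rightarrow> real^'d"
    and m M \<alpha> \<beta> :: real
    and xprev xt xstar v :: "real^'d"
  assumes norm: "is_norm N"
    and grad: "\<forall>y. (Phi has_derivative (\<lambda>h. gPhi y \<bullet> h)) (at y)"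
    and Phi_convex: "convex_on UNIV Phi"
    and m_pos: "0 < m" and mM: "m \<le> M"
    and breg_bounds: "\<forall>x y. m / 2 * (N (x - y))\<^sup>2 \<le> bregman Phi gPhi x y
                          \<and> bregman Phi gPhi x y \<le> M / 2 * (N (x - y))\<^sup>2"
    and beta_pos: "0 < \<beta>"
    and f_convex: "convex_on UNIV f"
    and v_min: "\<forall>x. f v \<le> f x"
    and step: "pobd_step N Phi gPhi \<beta> f v xprev xt"
    and star: "f xstar < f xt"
    and alpha_pos: "0 < \<alpha>"
    and growth: "\<forall>x. f x \<ge> \<alpha> * N (x - v)"
  shows "N (xt - xstar) - N (xstar - xprev)
           \<le> - ((1 / sqrt (M / m)) * sqrt (1 + (2 / (\<alpha> * \<beta>))\<^sup>2) - 2 / (\<alpha> * \<beta>))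
               * N (xt - xprev)"
proof -
  let ?D = "bregman Phi gPhi"
  define a b c where "a = N (xt - xstar)" and "b = N (xt - xprev)" and "c = N (xstar - xprev)"
  have "xt \<noteq> v" using star v_min by (metis not_le)
  then obtain l where proj: "is_bregman_proj Phi gPhi {x. f x \<le> l} xprev xt"
    and balance: "b = \<beta> * l"
    using step unfolding pobd_step_def b_def by auto
  have xt_l: "f xt \<le> l" using proj unfolding is_bregman_proj_def by simp
  have "?D xstar xt + ?D xt xprev \<le> ?D xstar xprev"
    using bregman_proj_pythagoras[OF norm convex_sublevel_set[OF f_convex] proj, of "M / 2"]
      breg_bounds m_pos mM star xt_l by auto
  then have "m * (a\<^sup>2 + b\<^sup>2) \<le> M * c\<^sup>2"
    using breg_bounds[rule_format, of xstar xt] breg_bounds[rule_format, of xt xprev]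
      breg_bounds[rule_format, of xstar xprev] is_norm_minus_commute[OF norm, of xt xstar]
    unfolding a_def b_def c_def by (simp add: algebra_simps)
  then have "m / M * (a\<^sup>2 + b\<^sup>2) \<le> c\<^sup>2"
    using m_pos mM by (simp add: pos_divide_le_eq mult.commute)
  then have c_ge: "sqrt (m / M) * sqrt (a\<^sup>2 + b\<^sup>2) \<le> c"
    using is_norm_nonneg[OF norm, of "xstar - xprev"] unfolding c_def
    by (metis real_sqrt_le_mono real_sqrt_mult real_sqrt_abs abs_of_nonneg)
  have "a \<le> 2 * l / \<alpha>"
    unfolding a_def using sublevel_set_dist_le[OF norm growth alpha_pos xt_l] star xt_l by simp
  then have a_le: "a \<le> 2 / (\<alpha> * \<beta>) * b"
    using beta_pos unfolding balance by simp
  have "0 \<le> b" unfolding b_def by (rule is_norm_nonneg[OF norm])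
  moreover have "0 < sqrt (m / M)" "sqrt (m / M) \<le> 1" using m_pos mM by auto
  ultimately
  have "a - c \<le> - (sqrt (m / M) * sqrt (1 + (2 / (\<alpha> * \<beta>))\<^sup>2) - 2 / (\<alpha> * \<beta>)) * b"
    using diff_le_of_sqrt_sum_squares_le a_le c_ge by blast
  moreover have "sqrt (m / M) = 1 / sqrt (M / m)" by (simp add: real_sqrt_divide)
  ultimately show ?thesis unfolding a_def b_def c_def by simp
qed

end
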